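(* Let $0\le b<d\le n$ be integers and fix a homological degree. (1) If $\hat z$ is a relative cycle of the pair $\hat K(b,d]$ that contains a vertical cell $\tau\times\{d\}$ with $\min\tau=d$, then $[\hat z]\notin\operatorname{im}\big(H(\hat K(b,d-1])\to H(\hat K(b,d])\big)$. (2) If $\hat z$ is a relative cycle of the pair $\hat K[b,d)$ that contains a vertical cell $\tau\times\{b\}$ with $\max\tau=b$, then $[\hat z]\notin\operatorname{im}\big(H(\hat K[b+1,d))\to H(\hat K[b,d))\big)$. (3) If $\hat z$ is a cycle in $\hat K[b,d]=\hat K_b^d$ that contains vertical cells $\sigma\times\{b\}$ and $\tau\times\{d\}$ with $\max\sigma=b$ and $\min\tau=d$, then $[\hat z]\notin\operatorname{im}\big(H(\hat K[b+1,d])\to H(\hat K[b,d])\big)$ and $[\hat z]\notin\operatorname{im}\big(H(\hat K[b,d-1])\to H(\hat K[b,d])\big)$.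
   Context: Fix a field $\mathbb F$; all chains and homology groups have coefficients in $\mathbb F$. Let $n\ge 1$ and let $K$ be a finite $\Delta$-complex (distinct simplices may have the same boundary) in which every simplex $\sigma$ carries an integer interval $T(\sigma)=[\min\sigma,\max\sigma]\subseteq[0,n]$ with $\min\sigma<\max\sigma$, such that for each integer $i$ the set $K_i=\{\sigma: i\in T(\sigma)\}$ is a subcomplex (these form a zigzag $K_0\to K_1\leftarrow K_2\to\cdots$), and such that whenever $\sigma$ is a proper face of $\tau$ we have $\min\sigma<\min\tau<\max\tau<\max\sigma$. The prism $\hat K$ is the cell complex whose cells are the vertical cells $\sigma\times\{i\}$ for $\sigma\in K$ and integers $i\in T(\sigma)$ (of dimension $\dim\sigma$) and the horizontal cells $\sigma\times[i,i+1]$ for integers $i$ with $[i,i+1]\subseteq T(\sigma)$ (of dimension $\dim\sigma+1$), with boundary $\partial(\sigma\times\{i\})=(\partial\sigma)\times\{i\}$ and $\partial(\sigma\times[i,i+1])=(\partial\sigma)\times[i,i+1]+(-1)^{\dim\sigma}(\sigma\times\{i+1\}-\sigma\times\{i\})$ (terms not in $\hat K$ do not occur). For integers $i\le j$, $\hat K_i^j$ is the subcomplex of cells $\sigma\times T$ with $T\subseteq[i,j]$; so $\hat K_{-1}^{n+1}=\hat K$. For integers $b\le d$ define the pairs $\hat K[b,d]=(\hat K_b^d,\emptyset)$, $\hat K(b,d]=(\hat K_{-1}^d,\hat K_{-1}^b)$, $\hat K[b,d)=(\hat K_b^{n+1},\hat K_d^{n+1})$, $\hat K(b,d)=(\hat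 K,\hat K_{-1}^b\cup\hat K_d^{n+1})$, and write $H(\cdot)$ for their relative homology; maps between these groups are induced by inclusions of pairs. A relative cycle of a pair $(X,A)$ is a chain in $X$ whose boundary lies in $A$. A chain "contains" a cell if the cell's coefficient is nonzero. *)

theory Defs
  imports Main
begin

text \<open>Distinct simplices may have equal boundaries.\<close>

definition delta_complex :: "'a set \<Rightarrow> ('a \<Rightarrow> nat) \<Rightarrow> ('a \<Rightarrow> nat \<Rightarrow> 'a) \<Rightarrow> bool" where
  "delta_complex S dim face \<longleftrightarrow> finite S \<and>
     (\<forall>s\<in>S. \<forall>i\<le>dim s. 0 < dim s \<longrightarrow> face s i \<in> S \<and> dim (face s i) = dim s - 1) \<and>
     (\<forall>s\<in>S. \<forall>i j. i < j \<and> j \<le> dim s \<and> 1 < dim s \<longrightarrow>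
        face (face s j) i = face (face s i) (j - 1))"

definition facet_rel :: "'a set \<Rightarrow> ('a \<Rightarrow> nat) \<Rightarrow> ('a \<Rightarrow> nat \<Rightarrow> 'a) \<Rightarrow> ('a \<times> 'a) set" where
  "facet_rel S dim face = {(face s i, s) | s i. s \<in> S \<and> 0 < dim s \<and> i \<le> dim s}"

text \<open>Filtered Delta-complex with intervals T(s) = [mn s, mx s] \<subseteq> [0,n].
  Proper faces are the transitive closure of the facet relation.\<close>
definition interval_complex ::
  "'a set \<Rightarrow> ('a \<Rightarrow> nat) \<Rightarrow> ('a \<Rightarrow> nat \<Rightarrow> 'a) \<Rightarrow> ('a \<Rightarrow> int) \<Rightarrow> ('a \<Rightarrow> int) \<Rightarrow> int \<Rightarrow> bool" where
  "interval_complex S dim face mn mx n \<longleftrightarrow> delta_complex S dim face \<and>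
     (\<forall>s\<in>S. 0 \<le> mn s \<and> mn s < mx s \<and> mx s \<le> n) \<and>
     (\<forall>i::int. \<forall>s\<in>S. mn s \<le> i \<and> i \<le> mx s \<longrightarrow>
        (\<forall>t. (t, s) \<in> facet_rel S dim face \<longrightarrow> mn t \<le> i \<and> i \<le> mx t)) \<and>
     (\<forall>s t. (t, s) \<in> (facet_rel S dim face)\<^sup>+ \<longrightarrow> mn t < mn s \<and> mn s < mx s \<and> mx s < mx t)"

text \<open>Cells of the prism: Vert s i = s \<times> {i}, Horiz s i = s \<times> [i, i+1].\<close>
datatype 'a pcell = Vert 'a int | Horiz 'a int

fun cell_dim :: "('a \<Rightarrow> nat) \<Rightarrow> 'a pcell \<Rightarrow> nat" where
  "cell_dim dim (Vert s i) = dim s"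
| "cell_dim dim (Horiz s i) = dim s + 1"

text \<open>The subcomplex \<open>hat K_i^j\<close>: cells s \<times> T with T \<subseteq> [i,j].\<close>
definition prism_cells :: "'a set \<Rightarrow> ('a \<Rightarrow> int) \<Rightarrow> ('a \<Rightarrow> int) \<Rightarrow> int \<Rightarrow> int \<Rightarrow> 'a pcell set" where
  "prism_cells S mn mx i j =
     {Vert s t | s t. s \<in> S \<and> mn s \<le> t \<and> t \<le> mx s \<and> i \<le> t \<and> t \<le> j} \<union>
     {Horiz s t | s t. s \<in> S \<and> mn s \<le> t \<and> t + 1 \<le> mx s \<and> i \<le> t \<and> t + 1 \<le> j}"

definition ind :: "bool \<Rightarrow> 'f::field" where
  "ind P = (if P then 1 else 0)"

fun cell_bd :: "('a \<Rightarrow> nat) \<Rightarrow> ('a \<Rightarrow> nat \<Rightarrow> 'a) \<Rightarrow> 'a pcell \<Rightarrow> 'a pcell \<Rightarrow> 'f::field" where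
  "cell_bd dim face (Vert s t) x =
     (if dim s = 0 then 0 else (\<Sum>i\<le>dim s. (-1) ^ i * ind (x = Vert (face s i) t)))"
| "cell_bd dim face (Horiz s t) x =
     (if dim s = 0 then 0 else (\<Sum>i\<le>dim s. (-1) ^ i * ind (x = Horiz (face s i) t)))
     + (-1) ^ dim s * (ind (x = Vert s (t + 1)) - ind (x = Vert s t))"

definition chain_bd :: "'a set \<Rightarrow> ('a \<Rightarrow> nat) \<Rightarrow> ('a \<Rightarrow> nat \<Rightarrow> 'a) \<Rightarrow> ('a \<Rightarrow> int) \<Rightarrow> ('a \<Rightarrow> int)
    \<Rightarrow> int \<Rightarrow> ('a pcell \<Rightarrow> 'f::field) \<Rightarrow> 'a pcell \<Rightarrow> 'f" where
  "chain_bd S dim face mn mx n c =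
     (\<lambda>x. \<Sum>y\<in>prism_cells S mn mx (-1) (n + 1). c y * cell_bd dim face y x)"

definition is_chain :: "('a \<Rightarrow> nat) \<Rightarrow> 'a pcell set \<Rightarrow> nat \<Rightarrow> ('a pcell \<Rightarrow> 'f::field) \<Rightarrow> bool" where
  "is_chain dim X p c \<longleftrightarrow> (\<forall>x. c x \<noteq> 0 \<longrightarrow> x \<in> X \<and> cell_dim dim x = p)"

definition rel_cycle :: "'a set \<Rightarrow> ('a \<Rightarrow> nat) \<Rightarrow> ('a \<Rightarrow> nat \<Rightarrow> 'a) \<Rightarrow> ('a \<Rightarrow> int) \<Rightarrow> ('a \<Rightarrow> int)
    \<Rightarrow> int \<Rightarrow> 'a pcell set \<Rightarrow> 'a pcell set \<Rightarrow> nat \<Rightarrow> ('a pcell \<Rightarrow> 'f::field) \<Rightarrow> bool" where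
  "rel_cycle S dim face mn mx n X A p z \<longleftrightarrow>
     is_chain dim X p z \<and> (\<forall>x. chain_bd S dim face mn mx n z x \<noteq> 0 \<longrightarrow> x \<in> A)"

text \<open>The class of the relative p-cycle z of (X, A) lies in the image of
  H_p(X', A') \<rightarrow> H_p(X, A) (for (X',A') \<subseteq> (X,A)): z is homologous in (X,A) to a
  relative cycle w of (X', A'), i.e. z - w - bd c is supported in A for some (p+1)-chain c of X.\<close>
definition in_image :: "'a set \<Rightarrow> ('a \<Rightarrow> nat) \<Rightarrow> ('a \<Rightarrow> nat \<Rightarrow> 'a) \<Rightarrow> ('a \<Rightarrow> int) \<Rightarrow> ('a \<Rightarrow> int)
    \<Rightarrow> int \<Rightarrow> 'a pcell set \<Rightarrow> 'a pcell set \<Rightarrow> 'a pcell set \<Rightarrow> 'a pcell set \<Rightarrow> nat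
    \<Rightarrow> ('a pcell \<Rightarrow> 'f::field) \<Rightarrow> bool" where
  "in_image S dim face mn mx n X' A' X A p z \<longleftrightarrow>
     (\<exists>w c. rel_cycle S dim face mn mx n X' A' p w \<and> is_chain dim X (p + 1) c \<and>
        (\<forall>x. z x - w x - chain_bd S dim face mn mx n c x \<noteq> 0 \<longrightarrow> x \<in> A))"

end

theory Submission
  imports Defs
begin

text \<open>A vertical cell \<open>\<tau> \<times> {t}\<close> occurs in the boundary of \<open>\<sigma> \<times> {t}\<close> for cofacets \<open>\<sigma>\<close> of
  \<open>\<tau>\<close> and of the horizontal cells \<open>\<tau> \<times> [t-1,t]\<close> and \<open>\<tau> \<times> [t,t+1]\<close>, and of nothing else.
  If \<open>min \<tau> = t\<close>, the cofacets are born strictly after \<open>t\<close> and \<open>\<tau> \<times> [t-1,t]\<close> does not exist,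
  so inside \<open>\<hat>K\<^sub>i\<^sup>t\<close> the cell \<open>\<tau> \<times> {t}\<close> is a free face: no chain of \<open>\<hat>K\<^sub>i\<^sup>t\<close> has it in its
  boundary. Hence its coefficient in a cycle cannot be changed by a boundary of \<open>\<hat>K\<^sub>i\<^sup>t\<close>, and
  it is not carried by any cycle of a subcomplex missing it. Dually for \<open>max \<tau> = t\<close>.\<close>

lemma Vert_in_prism_cells [simp]:
  "Vert s t \<in> prism_cells S mn mx i j \<longleftrightarrow> s \<in> S \<and> mn s \<le> t \<and> t \<le> mx s \<and> i \<le> t \<and> t \<le> j"
  by (auto simp: prism_cells_def)

lemma Horiz_in_prism_cells [simp]:
  "Horiz s t \<in> prism_cells S mn mx i j \<longleftrightarrow> s \<in> S \<and> mn s \<le> t \<and> t + 1 \<le> mx s \<and> i \<le> t \<and> t + 1 \<le> j"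
  by (auto simp: prism_cells_def)

lemma interval_complex_facet_interval:
  assumes "interval_complex S dim face mn mx n" "s \<in> S" "0 < dim s" "i \<le> dim s"
  shows "mn (face s i) < mn s" "mx s < mx (face s i)"
proof -
  have "(face s i, s) \<in> (facet_rel S dim face)\<^sup>+"
    using assms(2-4) by (auto simp: facet_rel_def)
  then show "mn (face s i) < mn s" "mx s < mx (face s i)"
    using assms(1) unfolding interval_complex_def by blast+
qed

lemma cell_bd_Vert_nonzeroE:
  assumes "cell_bd dim face y (Vert \<tau> t) \<noteq> (0::'f::field)"
  obtains (cofacet) s k where "y = Vert s t" "0 < dim s" "k \<le> dim s" "\<tau> = face s k"
    | (Horiz_up) "y = Horiz \<tau> t"
    | (Horiz_down) "y = Horiz \<tau> (t - 1)"
proof (cases y)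
  case (Vert s u)
  with assms have "0 < dim s"
    and "(\<Sum>k\<le>dim s. (-1) ^ k * ind (Vert \<tau> t = Vert (face s k) u)) \<noteq> (0::'f)"
    by (simp_all split: if_splits)
  then obtain k where "k \<le> dim s" "ind (Vert \<tau> t = Vert (face s k) u) \<noteq> (0::'f)"
    by (auto elim: sum.not_neutral_contains_not_neutral)
  then have "\<tau> = face s k" "u = t"
    by (simp_all add: ind_def split: if_splits)
  with Vert \<open>0 < dim s\<close> \<open>k \<le> dim s\<close> show ?thesis by (intro that(1)) simp_all
next
  case (Horiz s u)
  with assms have "\<tau> = s" "t = u + 1 \<or> t = u"
    by (auto simp: ind_def split: if_splits)
  with Horiz that(2,3) show ?thesis by auto
qed

lemma cell_bd_Vert_mn_eq_zero:
  assumes K: "interval_complex S dim face mn mx n" and "mn \<tau> = t"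
    and y: "y \<in> prism_cells S mn mx i t"
  shows "cell_bd dim face y (Vert \<tau> t) = (0::'f::field)"
proof (rule ccontr)
  assume "cell_bd dim face y (Vert \<tau> t) \<noteq> (0::'f)"
  then show False
  proof (cases rule: cell_bd_Vert_nonzeroE)
    case (cofacet s k)
    with y have "s \<in> S" "mn s \<le> t" by simp_all
    with interval_complex_facet_interval(1)[OF K _ cofacet(2,3)] cofacet(4) \<open>mn \<tau> = t\<close>
    show False by auto
  qed (use y \<open>mn \<tau> = t\<close> in simp_all)
qed

lemma cell_bd_Vert_mx_eq_zero:
  assumes K: "interval_complex S dim face mn mx n" and "mx \<tau> = t"
    and y: "y \<in> prism_cells S mn mx t j"
  shows "cell_bd dim face y (Vert \<tau> t) = (0::'f::field)"
proof (rule ccontr)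
  assume "cell_bd dim face y (Vert \<tau> t) \<noteq> (0::'f)"
  then show False
  proof (cases rule: cell_bd_Vert_nonzeroE)
    case (cofacet s k)
    with y have "s \<in> S" "t \<le> mx s" by simp_all
    with interval_complex_facet_interval(2)[OF K _ cofacet(2,3)] cofacet(4) \<open>mx \<tau> = t\<close>
    show False by auto
  qed (use y \<open>mx \<tau> = t\<close> in simp_all)
qed

lemma not_in_image_if_free_cell:
  fixes z :: "'a pcell \<Rightarrow> 'f::field"
  assumes "z x \<noteq> 0" "x \<notin> A" "x \<notin> X'"
    and free: "\<And>y. y \<in> X \<Longrightarrow> cell_bd dim face y x = (0::'f)"
  shows "\<not> in_image S dim face mn mx n X' A' X A p z"
proof
  assume "in_image S dim face mn mx n X' A' X A p z"
  then obtain w c where w: "rel_cycle S dim face mn mx n X' A' p w"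
    and c: "is_chain dim X (p + 1) c"
    and homologous: "\<forall>x. z x - w x - chain_bd S dim face mn mx n c x \<noteq> 0 \<longrightarrow> x \<in> A"
    unfolding in_image_def by blast
  have "w x = 0"
    using w \<open>x \<notin> X'\<close> by (auto simp: rel_cycle_def is_chain_def)
  moreover have "c y * cell_bd dim face y x = 0" for y
    using c free[of y] by (cases "c y = 0") (auto simp: is_chain_def)
  then have "chain_bd S dim face mn mx n c x = 0"
    by (simp add: chain_bd_def sum.neutral)
  moreover have "z x - w x - chain_bd S dim face mn mx n c x = 0"
    using homologous \<open>x \<notin> A\<close> by blast
  ultimately show False
    using \<open>z x \<noteq> 0\<close> by simp
qed

theorem lemma5p1:
  fixes S :: "'a set" and dim :: "'a \<Rightarrow> nat" and face :: "'a \<Rightarrow> nat \<Rightarrow> 'a"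
    and mn mx :: "'a \<Rightarrow> int" and n b d :: int and p :: nat
  assumes K: "interval_complex S dim face mn mx n"
    and n1: "1 \<le> n"
    and bd: "0 \<le> b" "b < d" "d \<le> n"
  defines "P \<equiv> prism_cells S mn mx"
  shows
    "(\<forall>(z :: 'a pcell \<Rightarrow> 'f::field) \<tau>.
        rel_cycle S dim face mn mx n (P (-1) d) (P (-1) b) p z \<and>
        \<tau> \<in> S \<and> mn \<tau> = d \<and> z (Vert \<tau> d) \<noteq> 0 \<longrightarrow>
        \<not> in_image S dim face mn mx n (P (-1) (d - 1)) (P (-1) b) (P (-1) d) (P (-1) b) p z)
   \<and> (\<forall>(z :: 'a pcell \<Rightarrow> 'f) \<tau>.
        rel_cycle S dim face mn mx n (P b (n + 1)) (P d (n + 1)) p z \<and>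
        \<tau> \<in> S \<and> mx \<tau> = b \<and> z (Vert \<tau> b) \<noteq> 0 \<longrightarrow>
        \<not> in_image S dim face mn mx n (P (b + 1) (n + 1)) (P d (n + 1)) (P b (n + 1)) (P d (n + 1)) p z)
   \<and> (\<forall>(z :: 'a pcell \<Rightarrow> 'f) \<sigma> \<tau>.
        rel_cycle S dim face mn mx n (P b d) {} p z \<and>
        \<sigma> \<in> S \<and> mx \<sigma> = b \<and> z (Vert \<sigma> b) \<noteq> 0 \<and>
        \<tau> \<in> S \<and> mn \<tau> = d \<and> z (Vert \<tau> d) \<noteq> 0 \<longrightarrow>
        \<not> in_image S dim face mn mx n (P (b + 1) d) {} (P b d) {} p z \<and>
        \<not> in_image S dim face mn mx n (P b (d - 1)) {} (P b d) {} p z)"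
proof (intro conjI allI impI; elim conjE)
  fix z :: "'a pcell \<Rightarrow> 'f" and \<tau> assume "mn \<tau> = d" "z (Vert \<tau> d) \<noteq> 0"
  then show "\<not> in_image S dim face mn mx n (P (-1) (d - 1)) (P (-1) b) (P (-1) d) (P (-1) b) p z"
    using bd by (intro not_in_image_if_free_cell[where x = "Vert \<tau> d"]) (auto simp: P_def cell_bd_Vert_mn_eq_zero[OF K])
next
  fix z :: "'a pcell \<Rightarrow> 'f" and \<tau> assume "mx \<tau> = b" "z (Vert \<tau> b) \<noteq> 0"
  then show "\<not> in_image S dim face mn mx n (P (b + 1) (n + 1)) (P d (n + 1)) (P b (n + 1)) (P d (n + 1)) p z"
    using bd by (intro not_in_image_if_free_cell[where x = "Vert \<tau> b"]) (auto simp: P_def cell_bd_Vert_mx_eq_zero[OF K])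
next
  fix z :: "'a pcell \<Rightarrow> 'f" and \<sigma> \<tau>
  assume "mx \<sigma> = b" "z (Vert \<sigma> b) \<noteq> 0" "mn \<tau> = d" "z (Vert \<tau> d) \<noteq> 0"
  from \<open>mx \<sigma> = b\<close> \<open>z (Vert \<sigma> b) \<noteq> 0\<close>
  show "\<not> in_image S dim face mn mx n (P (b + 1) d) {} (P b d) {} p z"
    using bd by (intro not_in_image_if_free_cell[where x = "Vert \<sigma> b"]) (auto simp: P_def cell_bd_Vert_mx_eq_zero[OF K])
  from \<open>mn \<tau> = d\<close> \<open>z (Vert \<tau> d) \<noteq> 0\<close>
  show "\<not> in_image S dim face mn mx n (P b (d - 1)) {} (P b d) {} p z"
    using bd by (intro not_in_image_if_free_cell[where x = "Vert \<tau> d"]) (auto simp: P_def cell_bd_Vert_mn_eq_zero[OF K])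
qed

end
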